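(* Let $F_1,\dots,F_n:\mathbb{R}^d\to\mathbb{R}^d$ with each $F_i$ being $L_i$-Lipschitz, let $F=\frac1n\sum_{i=1}^nF_i$, and let $x^*$ satisfy $F(x^* )=0$. Let $v\in\mathbb{R}^n_+$ be a sampling vector (random, $\mathbb{E}[v_i]=1$ for all $i$) and $g(x)=F_v(x):=\frac1n\sum_{i=1}^n v_iF_i(x)$. Then the Expected Residual condition holds, i.e. there is $\delta$ with $$\mathbb{E}\big\|(g(x)-g(x^* ))-(F(x)-F(x^* ))\big\|^2\le\frac{\delta}{2}\|x-x^*\|^2\quad\forall x\in\mathbb{R}^d.$$ If, in addition, $n\ge 2$ and $v$ is a $\tau$-minibatch sampling for some $\tau\in\{1,\dots,n\}$, then this holds with $$\delta=\frac{2}{n\tau}\,\frac{n-\tau}{n-1}\sum_{i=1}^nL_i^2,\qquad\text{and}\qquad \sigma_*^2:=\mathbb{E}\|g(x^* )\|^2=\frac{1}{n\tau}\,\frac{n-\tau}{n-1}\sum_{i=1}^n\|F_i(x^* )\|^2 .$$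
   Context: A $\tau$-minibatch sampling is the random vector $v\in\mathbb{R}^n$ such that for every subset $S\subseteq\{1,\dots,n\}$ with $|S|=\tau$, $\Pr\big[v=\frac{n}{\tau}\sum_{i\in S}e_i\big]=1/\binom{n}{\tau}$ (it satisfies $\mathbb{E}[v_i]=1$). $L_i$-Lipschitz means $\|F_i(x)-F_i(y)\|\le L_i\|x-y\|$ for all $x,y$. For general sampling vectors $v$ the first claim is meant for $v$ with finite second moments $\mathbb{E}[v_i^2]<\infty$. *)

theory Defs
  imports "HOL-Probability.Probability"
begin

text \<open>Indices are 0,...,n-1 (i.e. i < n) instead of 1,...,n.\<close>

definition Fmean :: "nat \<Rightarrow> (nat \<Rightarrow> real ^ 'd \<Rightarrow> real ^ 'd) \<Rightarrow> real ^ 'd \<Rightarrow> real ^ 'd" where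
  "Fmean n Fs x = (1 / real n) *\<^sub>R (\<Sum>i<n. Fs i x)"

definition Fsamp :: "nat \<Rightarrow> (nat \<Rightarrow> real ^ 'd \<Rightarrow> real ^ 'd) \<Rightarrow> (nat \<Rightarrow> real) \<Rightarrow> real ^ 'd \<Rightarrow> real ^ 'd" where
  "Fsamp n Fs v x = (1 / real n) *\<^sub>R (\<Sum>i<n. v i *\<^sub>R Fs i x)"

definition sampling_vector :: "'w measure \<Rightarrow> nat \<Rightarrow> ('w \<Rightarrow> nat \<Rightarrow> real) \<Rightarrow> bool" where
  "sampling_vector M n v \<longleftrightarrow>
     (\<forall>i<n. (\<lambda>\<omega>. v \<omega> i) \<in> borel_measurable M
          \<and> (\<forall>\<omega>\<in>space M. v \<omega> i \<ge> 0)
          \<and> integrable M (\<lambda>\<omega>. v \<omega> i)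
          \<and> integral\<^sup>L M (\<lambda>\<omega>. v \<omega> i) = 1
          \<and> integrable M (\<lambda>\<omega>. (v \<omega> i)\<^sup>2))"

definition minibatch_sampling :: "'w measure \<Rightarrow> nat \<Rightarrow> nat \<Rightarrow> ('w \<Rightarrow> nat \<Rightarrow> real) \<Rightarrow> bool" where
  "minibatch_sampling M n \<tau> v \<longleftrightarrow>
     (\<forall>i<n. (\<lambda>\<omega>. v \<omega> i) \<in> borel_measurable M)
     \<and> (\<forall>S. S \<subseteq> {..<n} \<and> card S = \<tau> \<longrightarrow>
          {\<omega> \<in> space M. \<forall>i<n. v \<omega> i = (if i \<in> S then real n / real \<tau> else 0)} \<in> sets M
        \<and> measure M {\<omega> \<in> space M. \<forall>i<n. v \<omega> i = (if i \<in> S then real n / real \<tau> else 0)}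
            = 1 / real (n choose \<tau>))"

end

theory Submission
  imports Defs
begin

(* With a i = F i x - F i xstar, the residual equals (1/n) sum_i (v i - 1) a i.  For a general
   sampling vector, Cauchy-Schwarz bounds its squared norm by (1/n) sum_i (v i - 1)^2 (L i)^2 |x - xstar|^2,
   which is integrable because v has finite second moments.

   A tau-minibatch sampling is uniformly distributed over the vectors (n/tau) 1_S with |S| = tau, and there
   the residual is the batch mean (1/tau) sum_{i in S} b i of the centred vectors b i = a i - mean a.
   A uniform tau-subset contains a given index with probability tau/n and a given pair with probability
   tau (tau - 1) / (n (n - 1)); as the b i sum to zero, the mean of |sum_{i in S} b i|^2 over all
   tau-subsets is tau (n - tau) / (n (n - 1)) sum_i |b i|^2, and centring only decreases sum_i |b i|^2.
   The same computation with b i = F i xstar, which sum to n F xstar = 0, gives sigma_*^2. *)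

lemma card_subsets_containing:
  assumes "finite A" "T \<subseteq> A"
  shows "card {S. S \<subseteq> A \<and> card S = k \<and> T \<subseteq> S} * (card A choose card T)
       = (card A choose k) * (k choose card T)"
proof (cases "card T \<le> k")
  case True
  have "finite T" using assms finite_subset by blast
  have "bij_betw (\<lambda>S. S - T) {S. S \<subseteq> A \<and> card S = k \<and> T \<subseteq> S}
          {U. U \<subseteq> A - T \<and> card U = k - card T}"
  proof (rule bij_betwI[where g = "\<lambda>U. U \<union> T"])
    show "(\<lambda>U. U \<union> T) \<in> {U. U \<subseteq> A - T \<and> card U = k - card T} \<rightarrow> {S. S \<subseteq> A \<and> card S = k \<and> T \<subseteq> S}"
    proof
      fix U assume U: "U \<in> {U. U \<subseteq> A - T \<and> card U = k - card T}"
      then have "finite U" using assms(1) finite_subset by blast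
      then have "card (U \<union> T) = card U + card T"
        using U \<open>finite T\<close> by (intro card_Un_disjoint) auto
      then show "U \<union> T \<in> {S. S \<subseteq> A \<and> card S = k \<and> T \<subseteq> S}" using U assms True by auto
    qed
  qed (use \<open>finite T\<close> in \<open>auto simp: card_Diff_subset\<close>)
  then have "card {S. S \<subseteq> A \<and> card S = k \<and> T \<subseteq> S} = (card A - card T) choose (k - card T)"
    using assms \<open>finite T\<close> by (simp add: bij_betw_same_card n_subsets card_Diff_subset)
  moreover have "(card A choose k) * (k choose card T) = (card A choose card T) * ((card A - card T) choose (k - card T))"
  proof (cases "k \<le> card A")
    case False
    then have "card A - card T < k - card T" using True card_mono[OF assms] by arith
    then show ?thesis using False by (simp add: binomial_eq_0)
  qed (use True in \<open>simp add: choose_mult\<close>)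
  ultimately show ?thesis by simp
next
  case False
  then have "{S. S \<subseteq> A \<and> card S = k \<and> T \<subseteq> S} = {}"
    using assms(1) by (auto dest: card_mono[OF finite_subset])
  then show ?thesis using False by (simp only: card.empty) simp
qed

lemma real_choose_two: "real (m choose 2) = real m * (real m - 1) / 2"
proof -
  have "2 * (m choose 2) = m * (m - 1)"
    unfolding choose_two by (intro dvd_mult_div_cancel) auto
  then have "2 * real (m choose 2) = real m * real (m - 1)"
    by (metis of_nat_mult of_nat_numeral)
  then show ?thesis by (cases m) auto
qed

lemma subsets_containing_fraction:
  assumes "finite A" "T \<subseteq> A" "k \<le> card A"
  shows "real (card {S. S \<subseteq> A \<and> card S = k \<and> T \<subseteq> S}) / real (card A choose k)
       = real (k choose card T) / real (card A choose card T)"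
proof -
  have "card T \<le> card A" using assms card_mono by blast
  then have "real (card A choose k) \<noteq> 0" "real (card A choose card T) \<noteq> 0"
    using assms by simp_all
  with card_subsets_containing[OF assms(1,2), of k] show ?thesis
    by (simp add: field_simps flip: of_nat_mult)
qed

lemma sum_subsets_norm_sum_squared:
  fixes b :: "'i \<Rightarrow> 'a::real_inner"
  assumes "finite A"
  shows "(\<Sum>S | S \<subseteq> A \<and> card S = k. (norm (\<Sum>i\<in>S. b i))\<^sup>2)
       = (\<Sum>i\<in>A. \<Sum>j\<in>A. real (card {S. S \<subseteq> A \<and> card S = k \<and> {i, j} \<subseteq> S}) * inner (b i) (b j))"
proof -
  let ?K = "{S. S \<subseteq> A \<and> card S = k}"
  have "finite ?K" using assms by simp
  have "(norm (\<Sum>i\<in>S. b i))\<^sup>2 = (\<Sum>i\<in>A. \<Sum>j\<in>A. if {i, j} \<subseteq> S then inner (b i) (b j) else 0)"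
    if "S \<in> ?K" for S
  proof -
    have restrict: "(\<Sum>i\<in>S. g i) = (\<Sum>i\<in>A. if i \<in> S then g i else 0)" for g :: "'i \<Rightarrow> real"
      using that assms by (simp add: sum.If_cases Int_absorb1 Int_commute)
    have "(norm (\<Sum>i\<in>S. b i))\<^sup>2 = (\<Sum>i\<in>S. \<Sum>j\<in>S. inner (b i) (b j))"
      by (simp add: power2_norm_eq_inner inner_sum_left inner_sum_right) (rule sum.swap)
    also have "\<dots> = (\<Sum>i\<in>A. \<Sum>j\<in>A. if {i, j} \<subseteq> S then inner (b i) (b j) else 0)"
      unfolding restrict by (intro sum.cong) auto
    finally show ?thesis .
  qed
  then have "(\<Sum>S\<in>?K. (norm (\<Sum>i\<in>S. b i))\<^sup>2)
      = (\<Sum>S\<in>?K. \<Sum>i\<in>A. \<Sum>j\<in>A. if {i, j} \<subseteq> S then inner (b i) (b j) else 0)"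
    by (rule sum.cong[OF refl])
  also have "\<dots> = (\<Sum>i\<in>A. \<Sum>j\<in>A. \<Sum>S\<in>?K. if {i, j} \<subseteq> S then inner (b i) (b j) else 0)"
    by (simp only: sum.swap[of _ ?K])
  also have "\<dots> = (\<Sum>i\<in>A. \<Sum>j\<in>A. real (card {S. S \<subseteq> A \<and> card S = k \<and> {i, j} \<subseteq> S}) * inner (b i) (b j))"
    using \<open>finite ?K\<close> by (simp add: sum.If_cases Int_def)
  finally show ?thesis .
qed

lemma average_subsets_norm_sum_squared:
  fixes b :: "'i \<Rightarrow> 'a::real_inner"
  assumes "finite A" "2 \<le> card A" "k \<le> card A" "(\<Sum>i\<in>A. b i) = 0"
  shows "(\<Sum>S | S \<subseteq> A \<and> card S = k. (norm (\<Sum>i\<in>S. b i))\<^sup>2) / real (card A choose k)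
       = real k * (real (card A) - real k) / (real (card A) * (real (card A) - 1))
           * (\<Sum>i\<in>A. (norm (b i))\<^sup>2)"
proof -
  define n where "n = real (card A)"
  define p1 where "p1 = real k / n"
  define p2 where "p2 = real k * (real k - 1) / (n * (n - 1))"
  have n: "n \<ge> 2" using assms(2) unfolding n_def by simp
  have pair: "real (card {S. S \<subseteq> A \<and> card S = k \<and> {i, j} \<subseteq> S}) / real (card A choose k)
      = p2 + (if i = j then p1 - p2 else 0)" if "i \<in> A" "j \<in> A" for i j
  proof (cases "i = j")
    case True
    then show ?thesis
      using subsets_containing_fraction[OF assms(1), of "{i}" k] that assms(3)
      by (simp add: p1_def n_def)
  next
    case False
    then have "card {i, j} = 2" by simp
    moreover have "real (k choose 2) / real (card A choose 2) = p2"
      using n unfolding real_choose_two p2_def n_def by simp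
    ultimately have "real (k choose card {i, j}) / real (card A choose card {i, j}) = p2"
      by simp
    then show ?thesis
      using subsets_containing_fraction[OF assms(1), of "{i, j}" k] that assms(3) False by simp
  qed
  have "(\<Sum>S | S \<subseteq> A \<and> card S = k. (norm (\<Sum>i\<in>S. b i))\<^sup>2) / real (card A choose k)
      = (\<Sum>i\<in>A. \<Sum>j\<in>A. (p2 + (if i = j then p1 - p2 else 0)) * inner (b i) (b j))"
    unfolding sum_subsets_norm_sum_squared[OF assms(1)] sum_divide_distrib
  proof (intro sum.cong refl)
    fix i j assume "i \<in> A" "j \<in> A"
    show "real (card {S. S \<subseteq> A \<and> card S = k \<and> {i, j} \<subseteq> S}) * inner (b i) (b j) / real (card A choose k)
        = (p2 + (if i = j then p1 - p2 else 0)) * inner (b i) (b j)"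
      unfolding pair[OF \<open>i \<in> A\<close> \<open>j \<in> A\<close>, symmetric] by simp
  qed
  also have "\<dots> = p2 * inner (\<Sum>i\<in>A. b i) (\<Sum>j\<in>A. b j) + (p1 - p2) * (\<Sum>i\<in>A. (norm (b i))\<^sup>2)"
    by (simp add: distrib_right sum.distrib inner_sum_left inner_sum_right sum_distrib_left
        power2_norm_eq_inner if_distrib[of "\<lambda>c. c * _"] sum.If_cases assms(1) Int_absorb1)
      (rule sum.swap)
  also have "p1 - p2 = real k * (n - real k) / (n * (n - 1))"
    using n unfolding p1_def p2_def by (simp add: field_simps)
  finally show ?thesis using assms(4) unfolding n_def by simp
qed

lemma card_scaleR_mean:
  fixes a :: "'i \<Rightarrow> 'a::real_vector"
  shows "real (card A) *\<^sub>R ((1 / real (card A)) *\<^sub>R (\<Sum>j\<in>A. a j)) = (\<Sum>j\<in>A. a j)"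
  by (cases "card A = 0") (auto simp: card_eq_0_iff)

lemma sum_centered_eq_0:
  fixes a :: "'i \<Rightarrow> 'a::real_vector"
  shows "(\<Sum>i\<in>A. a i - (1 / real (card A)) *\<^sub>R (\<Sum>j\<in>A. a j)) = 0"
  by (simp only: sum_subtractf sum_constant_scaleR card_scaleR_mean) simp

lemma sum_sq_norm_centered_le:
  fixes a :: "'i \<Rightarrow> 'a::real_inner"
  shows "(\<Sum>i\<in>A. (norm (a i - (1 / real (card A)) *\<^sub>R (\<Sum>j\<in>A. a j)))\<^sup>2) \<le> (\<Sum>i\<in>A. (norm (a i))\<^sup>2)"
proof -
  define m where "m = (1 / real (card A)) *\<^sub>R (\<Sum>j\<in>A. a j)"
  have sum_a: "(\<Sum>j\<in>A. a j) = real (card A) *\<^sub>R m"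
    unfolding m_def by (rule card_scaleR_mean[symmetric])
  have "(\<Sum>i\<in>A. (norm (a i - m))\<^sup>2) = (\<Sum>i\<in>A. (norm (a i))\<^sup>2 - 2 * inner (a i) m + (norm m)\<^sup>2)"
    by (intro sum.cong refl) (simp add: power2_norm_eq_inner inner_diff_left inner_diff_right inner_commute)
  also have "\<dots> = (\<Sum>i\<in>A. (norm (a i))\<^sup>2) - real (card A) * (norm m)\<^sup>2"
    by (simp add: sum.distrib sum_subtractf flip: sum_distrib_left inner_sum_left)
       (simp add: sum_a power2_norm_eq_inner)
  finally show ?thesis unfolding m_def by simp
qed

lemma norm_mean_squared_le:
  fixes a :: "'i \<Rightarrow> 'a::real_normed_vector"
  shows "(norm ((1 / real (card A)) *\<^sub>R (\<Sum>i\<in>A. a i)))\<^sup>2 \<le> (\<Sum>i\<in>A. (norm (a i))\<^sup>2) / real (card A)"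
proof -
  have "norm ((1 / real (card A)) *\<^sub>R (\<Sum>i\<in>A. a i)) \<le> (\<Sum>i\<in>A. norm (a i)) / real (card A)"
    by (simp add: divide_right_mono norm_sum)
  then have "(norm ((1 / real (card A)) *\<^sub>R (\<Sum>i\<in>A. a i)))\<^sup>2 \<le> ((\<Sum>i\<in>A. norm (a i)) / real (card A))\<^sup>2"
    by (intro power_mono) auto
  also have "\<dots> \<le> (\<Sum>i\<in>A. (norm (a i))\<^sup>2) * real (card A) / (real (card A))\<^sup>2"
    unfolding power_divide by (intro divide_right_mono sum_squared_le_sum_of_squares) simp
  also have "\<dots> = (\<Sum>i\<in>A. (norm (a i))\<^sup>2) / real (card A)"
    by (simp add: power2_eq_square)
  finally show ?thesis .
qed

lemma Fsamp_cong: "(\<And>i. i < n \<Longrightarrow> u i = u' i) \<Longrightarrow> Fsamp n Fs u y = Fsamp n Fs u' y"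
  unfolding Fsamp_def by (intro arg_cong[where f = "\<lambda>z. _ *\<^sub>R z"] sum.cong) auto

lemma borel_measurable_Fsamp [measurable]:
  assumes [measurable]: "\<And>i. i < n \<Longrightarrow> (\<lambda>\<omega>. v \<omega> i) \<in> borel_measurable M"
  shows "(\<lambda>\<omega>. Fsamp n Fs (v \<omega>) y) \<in> borel_measurable M"
  unfolding Fsamp_def by measurable

lemma Fsamp_residual_eq:
  "Fsamp n Fs u x - Fsamp n Fs u y - (Fmean n Fs x - Fmean n Fs y)
     = (1 / real n) *\<^sub>R (\<Sum>i<n. (u i - 1) *\<^sub>R (Fs i x - Fs i y))"
proof -
  have "(\<Sum>i<n. (u i - 1) *\<^sub>R (Fs i x - Fs i y))
      = (\<Sum>i<n. u i *\<^sub>R Fs i x - u i *\<^sub>R Fs i y - (Fs i x - Fs i y))"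
    by (intro sum.cong refl) (simp add: algebra_simps)
  then show ?thesis
    by (simp add: Fsamp_def Fmean_def sum_subtractf scaleR_diff_right)
qed

definition minibatch_vector :: "nat \<Rightarrow> nat \<Rightarrow> nat set \<Rightarrow> nat \<Rightarrow> real" where
  "minibatch_vector n \<tau> S i = (if i \<in> S then real n / real \<tau> else 0)"

lemma Fsamp_minibatch_vector:
  assumes "S \<subseteq> {..<n}" "n \<ge> 1"
  shows "Fsamp n Fs (minibatch_vector n \<tau> S) y = (1 / real \<tau>) *\<^sub>R (\<Sum>i\<in>S. Fs i y)"
proof -
  have "(\<Sum>i<n. minibatch_vector n \<tau> S i *\<^sub>R Fs i y)
      = (\<Sum>i<n. if i \<in> S then (real n / real \<tau>) *\<^sub>R Fs i y else 0)"
    by (intro sum.cong) (auto simp: minibatch_vector_def)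
  also have "\<dots> = (\<Sum>i\<in>{..<n} \<inter> S. (real n / real \<tau>) *\<^sub>R Fs i y)"
    by (simp add: sum.inter_restrict)
  also have "{..<n} \<inter> S = S" using assms(1) by auto
  finally have "(\<Sum>i<n. minibatch_vector n \<tau> S i *\<^sub>R Fs i y) = (\<Sum>i\<in>S. (real n / real \<tau>) *\<^sub>R Fs i y)" .
  then show ?thesis using assms(2) by (simp add: Fsamp_def scaleR_sum_right)
qed

lemma Fsamp_minibatch_vector_residual:
  assumes "S \<subseteq> {..<n}" "card S = \<tau>" "\<tau> \<ge> 1"
  shows "Fsamp n Fs (minibatch_vector n \<tau> S) x - Fsamp n Fs (minibatch_vector n \<tau> S) y
         - (Fmean n Fs x - Fmean n Fs y)
       = (1 / real \<tau>) *\<^sub>R (\<Sum>i\<in>S. (Fs i x - Fs i y) - (Fmean n Fs x - Fmean n Fs y))"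
proof -
  have "n \<ge> 1" using assms card_mono[of "{..<n}" S] by simp
  then show ?thesis
    using assms
    by (simp add: Fsamp_minibatch_vector sum_subtractf sum_constant_scaleR scaleR_diff_right del: sum_constant)
qed

lemma (in prob_space) has_bochner_integral_finite_partition:
  fixes f :: "'a \<Rightarrow> 'b::{banach, second_countable_topology}"
  assumes "finite I" "disjoint_family_on E I" "\<And>S. S \<in> I \<Longrightarrow> E S \<in> events"
    and "(\<Sum>S\<in>I. prob (E S)) = 1"
    and "\<And>S \<omega>. S \<in> I \<Longrightarrow> \<omega> \<in> E S \<Longrightarrow> f \<omega> = c S"
    and "f \<in> borel_measurable M"
  shows "has_bochner_integral M f (\<Sum>S\<in>I. prob (E S) *\<^sub>R c S)"
proof -
  define g where "g \<omega> = (\<Sum>S\<in>I. indicator (E S) \<omega> *\<^sub>R c S)" for \<omega>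
  have "prob (\<Union>S\<in>I. E S) = 1"
    using assms(1-4) by (subst finite_measure_finite_Union) auto
  then have "AE \<omega> in M. \<omega> \<in> (\<Union>S\<in>I. E S)" by (rule AE_prob_1)
  then have "AE \<omega> in M. f \<omega> = g \<omega>"
  proof (rule AE_mp, intro AE_I2 impI)
    fix \<omega> assume "\<omega> \<in> (\<Union>S\<in>I. E S)"
    then obtain S0 where S0: "S0 \<in> I" "\<omega> \<in> E S0" by blast
    have "indicator (E S) \<omega> *\<^sub>R c S = (if S = S0 then c S else 0)" if "S \<in> I" for S
      using assms(2) S0 that unfolding disjoint_family_on_def by (auto simp: indicator_def)
    then have "g \<omega> = (\<Sum>S\<in>I. if S = S0 then c S else 0)"
      unfolding g_def by (intro sum.cong) auto
    then have "g \<omega> = c S0" using S0(1) assms(1) by simp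
    then show "f \<omega> = g \<omega>" using assms(5) S0 by simp
  qed
  moreover have "has_bochner_integral M g (\<Sum>S\<in>I. prob (E S) *\<^sub>R c S)"
    unfolding g_def using assms(3)
    by (intro has_bochner_integral_sum has_bochner_integral_indicator) (auto simp: less_top[symmetric])
  ultimately show ?thesis
    using assms(6) has_bochner_integral_cong_AE borel_measurable_has_bochner_integral by metis
qed

lemma minibatch_has_bochner_integral:
  fixes G :: "(nat \<Rightarrow> real) \<Rightarrow> real"
  assumes "prob_space M" "minibatch_sampling M n \<tau> v" "1 \<le> \<tau>" "\<tau> \<le> n"
    and "(\<lambda>\<omega>. G (v \<omega>)) \<in> borel_measurable M"
    and "\<And>u u'. (\<And>i. i < n \<Longrightarrow> u i = u' i) \<Longrightarrow> G u = G u'"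
  shows "has_bochner_integral M (\<lambda>\<omega>. G (v \<omega>))
           ((\<Sum>S | S \<subseteq> {..<n} \<and> card S = \<tau>. G (minibatch_vector n \<tau> S)) / real (n choose \<tau>))"
proof -
  interpret prob_space M by fact
  let ?I = "{S. S \<subseteq> {..<n} \<and> card S = \<tau>}"
  define E where "E S = {\<omega> \<in> space M. \<forall>i<n. v \<omega> i = minibatch_vector n \<tau> S i}" for S
  have E: "E S \<in> events" "prob (E S) = 1 / real (n choose \<tau>)" if "S \<in> ?I" for S
    using assms(2) that unfolding minibatch_sampling_def E_def minibatch_vector_def by blast+
  have "disjoint_family_on E ?I"
    unfolding disjoint_family_on_def
  proof (intro ballI impI)
    fix S S' assume "S \<in> ?I" "S' \<in> ?I" "S \<noteq> S'"
    then obtain i where "i < n" "i \<in> S \<longleftrightarrow> i \<notin> S'" by blast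
    have "real n / real \<tau> \<noteq> 0" using assms(3,4) by simp
    show "E S \<inter> E S' = {}"
    proof (rule ccontr)
      assume "E S \<inter> E S' \<noteq> {}"
      then obtain \<omega> where "\<omega> \<in> E S" "\<omega> \<in> E S'" by blast
      with \<open>i < n\<close> have "minibatch_vector n \<tau> S i = minibatch_vector n \<tau> S' i" unfolding E_def by auto
      with \<open>i \<in> S \<longleftrightarrow> i \<notin> S'\<close> \<open>real n / real \<tau> \<noteq> 0\<close> show False
        unfolding minibatch_vector_def by (auto split: if_splits)
    qed
  qed
  moreover have "(\<Sum>S\<in>?I. prob (E S)) = 1"
    using E assms(4) by (simp add: n_subsets)
  moreover have "G (v \<omega>) = G (minibatch_vector n \<tau> S)" if "\<omega> \<in> E S" for S \<omega>
    using that unfolding E_def by (intro assms(6)) auto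
  ultimately have "has_bochner_integral M (\<lambda>\<omega>. G (v \<omega>)) (\<Sum>S\<in>?I. prob (E S) *\<^sub>R G (minibatch_vector n \<tau> S))"
    using E(1) assms(5) by (intro has_bochner_integral_finite_partition) auto
  also have "(\<Sum>S\<in>?I. prob (E S) *\<^sub>R G (minibatch_vector n \<tau> S))
      = (\<Sum>S\<in>?I. G (minibatch_vector n \<tau> S)) / real (n choose \<tau>)"
    using E(2) by (simp add: sum_divide_distrib)
  finally show ?thesis .
qed

lemma minibatch_expected_sq_norm:
  fixes G :: "(nat \<Rightarrow> real) \<Rightarrow> 'a::real_inner" and b :: "nat \<Rightarrow> 'a"
  assumes "prob_space M" "minibatch_sampling M n \<tau> v" "1 \<le> \<tau>" "\<tau> \<le> n" "2 \<le> n"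
    and "(\<lambda>\<omega>. G (v \<omega>)) \<in> borel_measurable M"
    and "\<And>u u'. (\<And>i. i < n \<Longrightarrow> u i = u' i) \<Longrightarrow> G u = G u'"
    and "\<And>S. S \<subseteq> {..<n} \<Longrightarrow> card S = \<tau> \<Longrightarrow> G (minibatch_vector n \<tau> S) = (1 / real \<tau>) *\<^sub>R (\<Sum>i\<in>S. b i)"
    and "(\<Sum>i<n. b i) = 0"
  shows "has_bochner_integral M (\<lambda>\<omega>. (norm (G (v \<omega>)))\<^sup>2)
           (1 / (real n * real \<tau>) * ((real n - real \<tau>) / (real n - 1)) * (\<Sum>i<n. (norm (b i))\<^sup>2))"
proof -
  let ?I = "{S. S \<subseteq> {..<n} \<and> card S = \<tau>}"
  have "has_bochner_integral M (\<lambda>\<omega>. (norm (G (v \<omega>)))\<^sup>2)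
          ((\<Sum>S\<in>?I. (norm (G (minibatch_vector n \<tau> S)))\<^sup>2) / real (n choose \<tau>))"
    using assms(1-4) by (rule minibatch_has_bochner_integral) (use assms(6,7) in \<open>measurable, metis\<close>)
  also have "(\<Sum>S\<in>?I. (norm (G (minibatch_vector n \<tau> S)))\<^sup>2)
      = (1 / real \<tau>)\<^sup>2 * (\<Sum>S\<in>?I. (norm (\<Sum>i\<in>S. b i))\<^sup>2)"
    unfolding sum_distrib_left by (intro sum.cong refl) (simp add: assms(8) power_divide)
  also have "\<dots> / real (n choose \<tau>) = (1 / real \<tau>)\<^sup>2 *
      (real \<tau> * (real n - real \<tau>) / (real n * (real n - 1)) * (\<Sum>i<n. (norm (b i))\<^sup>2))"
    unfolding times_divide_eq_right[symmetric]
    using average_subsets_norm_sum_squared[of "{..<n}" \<tau> b] assms(4,5,9) by simp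
  also have "\<dots> = 1 / (real n * real \<tau>) * ((real n - real \<tau>) / (real n - 1)) * (\<Sum>i<n. (norm (b i))\<^sup>2)"
    using assms(3) by (simp add: power2_eq_square)
  finally show ?thesis .
qed

lemma sampling_vector_integrable_sq_dev:
  assumes "prob_space M" "sampling_vector M n v" "i < n"
  shows "integrable M (\<lambda>\<omega>. (v \<omega> i - 1)\<^sup>2)"
proof -
  interpret prob_space M by fact
  have "integrable M (\<lambda>\<omega>. (v \<omega> i)\<^sup>2 - 2 * v \<omega> i + 1)"
    using assms(2,3) unfolding sampling_vector_def by auto
  moreover have "(\<lambda>\<omega>. (v \<omega> i - 1)\<^sup>2) = (\<lambda>\<omega>. (v \<omega> i)\<^sup>2 - 2 * v \<omega> i + 1)"
    by (simp add: fun_eq_iff power2_diff)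
  ultimately show ?thesis by simp
qed

lemma sampling_vector_expected_residual_le:
  fixes Fs :: "nat \<Rightarrow> real ^ 'd \<Rightarrow> real ^ 'd"
  assumes "prob_space M" "sampling_vector M n v"
    and Lip: "\<And>i x y. i < n \<Longrightarrow> norm (Fs i x - Fs i y) \<le> L i * norm (x - y)"
  shows "integrable M (\<lambda>\<omega>. (norm ((Fsamp n Fs (v \<omega>) x - Fsamp n Fs (v \<omega>) xstar)
                                   - (Fmean n Fs x - Fmean n Fs xstar)))\<^sup>2)
       \<and> integral\<^sup>L M (\<lambda>\<omega>. (norm ((Fsamp n Fs (v \<omega>) x - Fsamp n Fs (v \<omega>) xstar)
                                   - (Fmean n Fs x - Fmean n Fs xstar)))\<^sup>2)
           \<le> (\<Sum>i<n. integral\<^sup>L M (\<lambda>\<omega>. (v \<omega> i - 1)\<^sup>2) * (L i)\<^sup>2) / real n * (norm (x - xstar))\<^sup>2"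
    (is "integrable M ?R \<and> integral\<^sup>L M ?R \<le> _")
proof -
  interpret prob_space M by fact
  have [measurable]: "(\<lambda>\<omega>. v \<omega> i) \<in> borel_measurable M" if "i < n" for i
    using assms(2) that unfolding sampling_vector_def by blast
  define r where "r = norm (x - xstar)"
  define B where "B \<omega> = (\<Sum>i<n. (v \<omega> i - 1)\<^sup>2 * ((L i)\<^sup>2 * r\<^sup>2 / real n))" for \<omega>
  have bound: "?R \<omega> \<le> B \<omega>" for \<omega>
  proof -
    have "?R \<omega> = (norm ((1 / real n) *\<^sub>R (\<Sum>i<n. (v \<omega> i - 1) *\<^sub>R (Fs i x - Fs i xstar))))\<^sup>2"
      by (simp only: Fsamp_residual_eq)
    also have "\<dots> \<le> (\<Sum>i<n. (norm ((v \<omega> i - 1) *\<^sub>R (Fs i x - Fs i xstar)))\<^sup>2) / real n"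
      using norm_mean_squared_le[where A = "{..<n}" and a = "\<lambda>i. (v \<omega> i - 1) *\<^sub>R (Fs i x - Fs i xstar)"]
      by simp
    also have "\<dots> \<le> (\<Sum>i<n. (v \<omega> i - 1)\<^sup>2 * ((L i)\<^sup>2 * r\<^sup>2)) / real n"
    proof (intro divide_right_mono sum_mono)
      fix i assume "i \<in> {..<n}"
      then have "(norm (Fs i x - Fs i xstar))\<^sup>2 \<le> (L i * r)\<^sup>2"
        using Lip unfolding r_def by (intro power_mono) auto
      then show "(norm ((v \<omega> i - 1) *\<^sub>R (Fs i x - Fs i xstar)))\<^sup>2 \<le> (v \<omega> i - 1)\<^sup>2 * ((L i)\<^sup>2 * r\<^sup>2)"
        by (simp add: power_mult_distrib mult_left_mono)
    qed simp
    finally show ?thesis unfolding B_def by (simp add: sum_divide_distrib)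
  qed
  have "integrable M B"
    unfolding B_def using sampling_vector_integrable_sq_dev[OF assms(1,2)] by auto
  have "integrable M ?R"
    using \<open>integrable M B\<close> by (rule Bochner_Integration.integrable_bound)
      (use bound in \<open>measurable, auto intro: order_trans[OF _ abs_ge_self]\<close>)
  have "integral\<^sup>L M ?R \<le> integral\<^sup>L M B"
    using \<open>integrable M ?R\<close> \<open>integrable M B\<close> bound by (intro integral_mono) auto
  also have "integral\<^sup>L M B = (\<Sum>i<n. integral\<^sup>L M (\<lambda>\<omega>. (v \<omega> i - 1)\<^sup>2) * (L i)\<^sup>2) / real n * r\<^sup>2"
    unfolding B_def using sampling_vector_integrable_sq_dev[OF assms(1,2)]
    by (simp add: Bochner_Integration.integral_sum sum_divide_distrib sum_distrib_right mult.assoc)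
  finally show ?thesis using \<open>integrable M ?R\<close> unfolding r_def by simp
qed

lemma minibatch_expected_residual_le:
  fixes Fs :: "nat \<Rightarrow> real ^ 'd \<Rightarrow> real ^ 'd"
  assumes "prob_space M" "minibatch_sampling M n \<tau> v" "1 \<le> \<tau>" "\<tau> \<le> n" "2 \<le> n"
    and Lip: "\<And>i x y. i < n \<Longrightarrow> norm (Fs i x - Fs i y) \<le> L i * norm (x - y)"
  shows "integrable M (\<lambda>\<omega>. (norm ((Fsamp n Fs (v \<omega>) x - Fsamp n Fs (v \<omega>) xstar)
                                   - (Fmean n Fs x - Fmean n Fs xstar)))\<^sup>2)
       \<and> integral\<^sup>L M (\<lambda>\<omega>. (norm ((Fsamp n Fs (v \<omega>) x - Fsamp n Fs (v \<omega>) xstar)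
                                   - (Fmean n Fs x - Fmean n Fs xstar)))\<^sup>2)
           \<le> 1 / (real n * real \<tau>) * ((real n - real \<tau>) / (real n - 1)) * (\<Sum>i<n. (L i)\<^sup>2)
               * (norm (x - xstar))\<^sup>2"
proof -
  have [measurable]: "(\<lambda>\<omega>. v \<omega> i) \<in> borel_measurable M" if "i < n" for i
    using assms(2) that unfolding minibatch_sampling_def by blast
  define K where "K = 1 / (real n * real \<tau>) * ((real n - real \<tau>) / (real n - 1))"
  define a where "a i = Fs i x - Fs i xstar" for i
  define m where "m = (1 / real (card {..<n})) *\<^sub>R (\<Sum>j<n. a j)"
  have m: "m = Fmean n Fs x - Fmean n Fs xstar"
    unfolding m_def a_def Fmean_def by (simp add: scaleR_diff_right sum_subtractf)
  have "has_bochner_integral M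
      (\<lambda>\<omega>. (norm ((Fsamp n Fs (v \<omega>) x - Fsamp n Fs (v \<omega>) xstar) - (Fmean n Fs x - Fmean n Fs xstar)))\<^sup>2)
      (K * (\<Sum>i<n. (norm (a i - m))\<^sup>2))"
    unfolding K_def using assms(1-5)
  proof (rule minibatch_expected_sq_norm)
    show "Fsamp n Fs u x - Fsamp n Fs u xstar - (Fmean n Fs x - Fmean n Fs xstar)
        = Fsamp n Fs u' x - Fsamp n Fs u' xstar - (Fmean n Fs x - Fmean n Fs xstar)"
      if "\<And>i. i < n \<Longrightarrow> u i = u' i" for u u'
      by (simp only: Fsamp_cong[where n = n and u = u and u' = u', OF that])
    show "(\<Sum>i<n. a i - m) = 0"
      using sum_centered_eq_0[where A = "{..<n}"] unfolding m_def by simp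
    show "Fsamp n Fs (minibatch_vector n \<tau> S) x - Fsamp n Fs (minibatch_vector n \<tau> S) xstar
        - (Fmean n Fs x - Fmean n Fs xstar) = (1 / real \<tau>) *\<^sub>R (\<Sum>i\<in>S. a i - m)"
      if "S \<subseteq> {..<n}" "card S = \<tau>" for S
      unfolding a_def m by (rule Fsamp_minibatch_vector_residual[OF that assms(3)])
  qed measurable
  moreover have "K * (\<Sum>i<n. (norm (a i - m))\<^sup>2) \<le> K * (\<Sum>i<n. (L i)\<^sup>2) * (norm (x - xstar))\<^sup>2"
  proof -
    have "K \<ge> 0" unfolding K_def using assms(4,5) by simp
    have "(\<Sum>i<n. (norm (a i - m))\<^sup>2) \<le> (\<Sum>i<n. (norm (a i))\<^sup>2)"
      using sum_sq_norm_centered_le[where A = "{..<n}"] unfolding m_def by simp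
    also have "\<dots> \<le> (\<Sum>i<n. (L i)\<^sup>2 * (norm (x - xstar))\<^sup>2)"
    proof (intro sum_mono)
      fix i assume "i \<in> {..<n}"
      then have "(norm (a i))\<^sup>2 \<le> (L i * norm (x - xstar))\<^sup>2"
        using Lip unfolding a_def by (intro power_mono) auto
      then show "(norm (a i))\<^sup>2 \<le> (L i)\<^sup>2 * (norm (x - xstar))\<^sup>2"
        by (simp add: power_mult_distrib)
    qed
    finally show ?thesis
      using \<open>K \<ge> 0\<close> by (simp add: mult_left_mono sum_distrib_right mult.assoc)
  qed
  ultimately show ?thesis unfolding K_def has_bochner_integral_iff by simp
qed

lemma minibatch_expected_sq_norm_at_root:
  fixes Fs :: "nat \<Rightarrow> real ^ 'd \<Rightarrow> real ^ 'd"
  assumes "prob_space M" "minibatch_sampling M n \<tau> v" "1 \<le> \<tau>" "\<tau> \<le> n" "2 \<le> n"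
    and "Fmean n Fs xstar = 0"
  shows "has_bochner_integral M (\<lambda>\<omega>. (norm (Fsamp n Fs (v \<omega>) xstar))\<^sup>2)
           (1 / (real n * real \<tau>) * ((real n - real \<tau>) / (real n - 1)) * (\<Sum>i<n. (norm (Fs i xstar))\<^sup>2))"
proof -
  have [measurable]: "(\<lambda>\<omega>. v \<omega> i) \<in> borel_measurable M" if "i < n" for i
    using assms(2) that unfolding minibatch_sampling_def by blast
  show ?thesis
    using assms(1-5)
  proof (rule minibatch_expected_sq_norm)
    show "(\<Sum>i<n. Fs i xstar) = 0"
      using assms(5,6) unfolding Fmean_def by simp
  qed (use assms(5) in \<open>auto simp: Fsamp_minibatch_vector intro: Fsamp_cong\<close>)
qed

theorem proposition3p3:
  fixes M :: "'w measure" and n :: nat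
    and Fs :: "nat \<Rightarrow> real ^ 'd \<Rightarrow> real ^ 'd" and L :: "nat \<Rightarrow> real"
    and xstar :: "real ^ 'd" and v :: "'w \<Rightarrow> nat \<Rightarrow> real"
  assumes "prob_space M"
    and "n \<ge> 1"
    and "\<And>i x y. i < n \<Longrightarrow> norm (Fs i x - Fs i y) \<le> L i * norm (x - y)"
    and "Fmean n Fs xstar = 0"
  shows "(sampling_vector M n v \<longrightarrow>
           (\<exists>\<delta>::real. \<forall>x.
              integrable M (\<lambda>\<omega>. (norm ((Fsamp n Fs (v \<omega>) x - Fsamp n Fs (v \<omega>) xstar)
                                         - (Fmean n Fs x - Fmean n Fs xstar)))\<^sup>2)
            \<and> integral\<^sup>L M (\<lambda>\<omega>. (norm ((Fsamp n Fs (v \<omega>) x - Fsamp n Fs (v \<omega>) xstar)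
                                         - (Fmean n Fs x - Fmean n Fs xstar)))\<^sup>2)
                \<le> \<delta> / 2 * (norm (x - xstar))\<^sup>2))
       \<and> (\<forall>\<tau>::nat. n \<ge> 2 \<and> 1 \<le> \<tau> \<and> \<tau> \<le> n \<and> minibatch_sampling M n \<tau> v \<longrightarrow>
           (let \<delta> = 2 / (real n * real \<tau>) * ((real n - real \<tau>) / (real n - 1)) * (\<Sum>i<n. (L i)\<^sup>2)
            in (\<forall>x.
              integrable M (\<lambda>\<omega>. (norm ((Fsamp n Fs (v \<omega>) x - Fsamp n Fs (v \<omega>) xstar)
                                         - (Fmean n Fs x - Fmean n Fs xstar)))\<^sup>2)
            \<and> integral\<^sup>L M (\<lambda>\<omega>. (norm ((Fsamp n Fs (v \<omega>) x - Fsamp n Fs (v \<omega>) xstar)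
                                         - (Fmean n Fs x - Fmean n Fs xstar)))\<^sup>2)
                \<le> \<delta> / 2 * (norm (x - xstar))\<^sup>2)
          \<and> integrable M (\<lambda>\<omega>. (norm (Fsamp n Fs (v \<omega>) xstar))\<^sup>2)
          \<and> integral\<^sup>L M (\<lambda>\<omega>. (norm (Fsamp n Fs (v \<omega>) xstar))\<^sup>2)
              = 1 / (real n * real \<tau>) * ((real n - real \<tau>) / (real n - 1))
                  * (\<Sum>i<n. (norm (Fs i xstar))\<^sup>2)))"
  apply (intro conjI impI allI)
  subgoal premises sampling
    using sampling_vector_expected_residual_le[where Fs = Fs and L = L, OF assms(1) sampling assms(3)]
    by (intro exI[of _ "2 * (\<Sum>i<n. integral\<^sup>L M (\<lambda>\<omega>. (v \<omega> i - 1)\<^sup>2) * (L i)\<^sup>2) / real n"]) simp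
  subgoal premises minibatch for \<tau>
  proof -
    from minibatch have "minibatch_sampling M n \<tau> v" "1 \<le> \<tau>" "\<tau> \<le> n" "2 \<le> n" by auto
    note residual_le = minibatch_expected_residual_le[where Fs = Fs and L = L, OF assms(1) this assms(3)]
      and at_root = minibatch_expected_sq_norm_at_root[OF assms(1) this assms(4)]
    have "2 / (real n * real \<tau>) * ((real n - real \<tau>) / (real n - 1)) * (\<Sum>i<n. (L i)\<^sup>2) / 2
        = 1 / (real n * real \<tau>) * ((real n - real \<tau>) / (real n - 1)) * (\<Sum>i<n. (L i)\<^sup>2)"
      by (simp add: divide_simps)
    then show ?thesis
      unfolding Let_def using residual_le at_root[unfolded has_bochner_integral_iff] by simp
  qed
  done

end
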